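(* Let $T=(T_{ij})_{i,j\ge1}$ be the infinite lower triangular Toeplitz matrix with $T_{ij}=\frac1{i-j+1}$ for $i\ge j$ and $T_{ij}=0$ for $i<j$. Then $T$ is invertible in the group of lower triangular matrices, and, with $w=T^{-1}\bigl(\tfrac12,\tfrac13,\tfrac14,\dots,\tfrac1{n+1},\dots\bigr)^T$, the matrix product $$\bigl(1,\tfrac12,\tfrac13,\dots,\tfrac1n,\dots\bigr)\,T^{-1}\,\bigl(\tfrac12,\tfrac13,\tfrac14,\dots,\tfrac1{n+1},\dots\bigr)^T=\sum_{n\ge1}\frac{w_n}{n}$$ converges and equals the Euler–Mascheroni constant $\gamma=\lim_{n\to\infty}\bigl(\sum_{m=1}^n\frac1m-\ln n\bigr)$. *)

theory Defs
  imports "HOL-Analysis.Analysis"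
begin

text \<open>Infinite matrices indexed by positive integers i, j \<ge> 1, represented as
  functions nat \<Rightarrow> nat \<Rightarrow> real (values at index 0 are irrelevant).\<close>

definition lower_tri :: "(nat \<Rightarrow> nat \<Rightarrow> real) \<Rightarrow> bool" where
  "lower_tri A \<longleftrightarrow> (\<forall>i\<ge>1. \<forall>j\<ge>1. i < j \<longrightarrow> A i j = 0)"

definition lt_mult :: "(nat \<Rightarrow> nat \<Rightarrow> real) \<Rightarrow> (nat \<Rightarrow> nat \<Rightarrow> real) \<Rightarrow> nat \<Rightarrow> nat \<Rightarrow> real" where
  "lt_mult A B i j = (\<Sum>k=1..i. A i k * B k j)"

definition is_identity :: "(nat \<Rightarrow> nat \<Rightarrow> real) \<Rightarrow> bool" where
  "is_identity A \<longleftrightarrow> (\<forall>i\<ge>1. \<forall>j\<ge>1. A i j = (if i = j then 1 else 0))"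

definition Tmat :: "nat \<Rightarrow> nat \<Rightarrow> real" where
  "Tmat i j = (if j \<le> i then 1 / real (i - j + 1) else 0)"

definition lt_apply :: "(nat \<Rightarrow> nat \<Rightarrow> real) \<Rightarrow> (nat \<Rightarrow> real) \<Rightarrow> nat \<Rightarrow> real" where
  "lt_apply A v i = (\<Sum>k=1..i. A i k * v k)"

end

theory Submission
  imports Defs
begin

(* Write sbinom n x = (-1)^n (x choose n) and let gregory n = integral_0^1 sbinom n.
   Differentiating sbinom (n+1) gives minus the convolution of (sbinom j x)_j with
   1/(m+1); since sbinom (n+1) vanishes at 0 and 1, integration over [0,1] shows
   that the sequence of Gregory coefficients convolved with 1/(m+1) is the unit
   sequence.  Because T is the lower triangular Toeplitz matrix of 1/(m+1), the
   Toeplitz matrix of the Gregory coefficients is its inverse, every left inverse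
   agrees with it, and the weights w = T^{-1}(1/2, 1/3, ...) are w_n = -gregory n.

   For the series, the binomial series gives sum_n -sbinom(n+1)(x) (1-u)^n =
   (1 - u^x)/(1 - u); integrating in u yields sum_n -sbinom(n+1)(x)/(n+1) = H(x),
   the harmonic number function, and integrating H over [0,1] yields gamma.  All
   terms are nonnegative on [0,1], so both exchanges of sum and integral follow from
   two general monotone convergence lemmas proved first. *)

lemma has_integral_sums_nonneg:
  fixes f :: "nat \<Rightarrow> 'a::euclidean_space \<Rightarrow> real"
  assumes integrals: "\<And>n. (f n has_integral c n) S"
    and nonneg: "\<And>n x. x \<in> S \<Longrightarrow> 0 \<le> f n x"
    and pointwise: "\<And>x. x \<in> S \<Longrightarrow> (\<lambda>n. f n x) sums g x"
    and total: "c sums C"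
  shows "(g has_integral C) S"
proof (rule has_integral_monotone_convergence_increasing)
  show "((\<lambda>x. \<Sum>n<N. f n x) has_integral (\<Sum>n<N. c n)) S" for N
    by (intro has_integral_sum finite_lessThan integrals)
  show "(\<Sum>n<N. f n x) \<le> (\<Sum>n<Suc N. f n x)" if "x \<in> S" for N x
    using nonneg[OF that] by simp
  show "(\<lambda>N. \<Sum>n<N. f n x) \<longlonglongrightarrow> g x" if "x \<in> S" for x
    using pointwise[OF that] by (simp add: sums_def)
  show "(\<lambda>N. \<Sum>n<N. c n) \<longlonglongrightarrow> C"
    using total by (simp add: sums_def)
qed

(* Their partial sums are
   bounded by I, so they converge, and the previous lemma identifies the limit. *)
lemma sums_has_integral_nonneg:
  fixes f :: "nat \<Rightarrow> 'a::euclidean_space \<Rightarrow> real"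
  assumes integrals: "\<And>n. (f n has_integral c n) S"
    and nonneg: "\<And>n x. x \<in> S \<Longrightarrow> 0 \<le> f n x"
    and pointwise: "\<And>x. x \<in> S \<Longrightarrow> (\<lambda>n. f n x) sums g x"
    and g: "(g has_integral I) S"
  shows "c sums I"
proof -
  have c_nonneg: "0 \<le> c n" for n
    using integrals nonneg by (rule has_integral_nonneg)
  have partial_le: "(\<Sum>n<N. c n) \<le> I" for N
  proof (rule has_integral_le)
    show "((\<lambda>x. \<Sum>n<N. f n x) has_integral (\<Sum>n<N. c n)) S"
      by (intro has_integral_sum finite_lessThan integrals)
    show "(\<Sum>n<N. f n x) \<le> g x" if "x \<in> S" for x
      using pointwise[OF that] nonneg[OF that]
      by (metis sums_summable sums_unique sum_le_suminf finite_lessThan)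
  qed (fact g)
  have "c sums suminf c"
    using summableI_nonneg_bounded[OF c_nonneg partial_le] by (rule summable_sums)
  then have "(g has_integral suminf c) S"
    using has_integral_sums_nonneg[OF integrals nonneg pointwise] by blast
  then have "suminf c = I"
    using g by (rule has_integral_unique)
  with \<open>c sums suminf c\<close> show ?thesis by simp
qed

definition toeplitz :: "(nat \<Rightarrow> real) \<Rightarrow> nat \<Rightarrow> nat \<Rightarrow> real" where
  "toeplitz a i j = (if j \<le> i then a (i - j) else 0)"

definition convolution :: "(nat \<Rightarrow> real) \<Rightarrow> (nat \<Rightarrow> real) \<Rightarrow> nat \<Rightarrow> real" where
  "convolution a c n = (\<Sum>m=0..n. a m * c (n - m))"

lemma convolution_commute: "convolution a c = convolution c a"
proof
  fix n
  have "convolution a c n = (\<Sum>m=0..n. a (n - m) * c (n - (n - m)))"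
    unfolding convolution_def by (subst sum.atLeastAtMost_rev) simp
  also have "\<dots> = convolution c a n"
    unfolding convolution_def by (intro sum.cong) auto
  finally show "convolution a c n = convolution c a n" .
qed

lemma lower_tri_toeplitz: "lower_tri (toeplitz a)"
  by (simp add: lower_tri_def toeplitz_def)

lemma lt_mult_toeplitz:
  assumes "1 \<le> j"
  shows "lt_mult (toeplitz a) (toeplitz c) i j = toeplitz (convolution a c) i j"
proof (cases "j \<le> i")
  case True
  have "lt_mult (toeplitz a) (toeplitz c) i j = (\<Sum>k=j..i. a (i - k) * c (k - j))"
    unfolding lt_mult_def using assms True
    by (intro sum.mono_neutral_cong_right) (auto simp: toeplitz_def)
  also have "\<dots> = (\<Sum>m=0..i-j. a m * c (i - j - m))"
    using True by (intro sum.reindex_bij_witness[where i="\<lambda>m. i - m" and j="\<lambda>k. i - k"]) auto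
  finally show ?thesis
    using True by (simp add: toeplitz_def convolution_def)
next
  case False
  then show ?thesis
    unfolding lt_mult_def by (intro trans[OF sum.neutral]) (auto simp: toeplitz_def)
qed

(* A Toeplitz matrix applied to a vector yields the convolution with its
   first term (index 0) removed, because the vector is indexed from 1. *)
lemma lt_apply_toeplitz:
  assumes "1 \<le> n"
  shows "lt_apply (toeplitz a) c n = convolution a c n - a n * c 0"
proof -
  have "lt_apply (toeplitz a) c n = (\<Sum>m=0..n-1. a m * c (n - m))"
    unfolding lt_apply_def toeplitz_def using assms
    by (intro sum.reindex_bij_witness[where i="\<lambda>m. n - m" and j="\<lambda>k. n - k"]) auto
  moreover have "convolution a c n = (\<Sum>m=0..n-1. a m * c (n - m)) + a n * c 0"
    unfolding convolution_def using assms by (cases n) (simp_all add: sum.atLeast0_atMost_Suc)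
  ultimately show ?thesis
    by simp
qed

(* The sequence 1/(m+1); it is the first column of T and, read from index 1, also the
   vector (1/2, 1/3, ...) of the theorem. *)
definition recip_succ :: "nat \<Rightarrow> real" where
  "recip_succ m = 1 / real (m + 1)"

lemma convolution_recip_succ:
  "convolution a recip_succ n = (\<Sum>j=0..n. a j / (real n + 1 - real j))"
  unfolding convolution_def recip_succ_def by (intro sum.cong) (auto simp: of_nat_diff)

lemma Tmat_toeplitz: "Tmat = toeplitz recip_succ"
  by (simp add: fun_eq_iff Tmat_def toeplitz_def recip_succ_def)

(* Associativity of the truncated product needs the middle factor to be lower
   triangular, so that no terms are lost by truncating the inner sums. *)
lemma lt_mult_assoc:
  assumes "lower_tri B"
  shows "lt_mult A (lt_mult B C) i j = lt_mult (lt_mult A B) C i j"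
proof -
  have "lt_mult A (lt_mult B C) i j = (\<Sum>k=1..i. \<Sum>l=1..i. A i k * B k l * C l j)"
    unfolding lt_mult_def sum_distrib_left mult.assoc
    using assms by (intro sum.cong refl sum.mono_neutral_cong_left) (auto simp: lower_tri_def)
  also have "\<dots> = lt_mult (lt_mult A B) C i j"
    unfolding lt_mult_def sum_distrib_right by (rule sum.swap)
  finally show ?thesis .
qed

lemma lt_mult_identity_left:
  assumes "is_identity E" "1 \<le> i"
  shows "lt_mult E A i j = A i j"
proof -
  have "lt_mult E A i j = (\<Sum>k=1..i. if k = i then A k j else 0)"
    unfolding lt_mult_def using assms by (intro sum.cong) (auto simp: is_identity_def)
  then show ?thesis using assms by simp
qed

lemma lt_mult_identity_right:
  assumes "is_identity E" "1 \<le> j" "j \<le> i"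
  shows "lt_mult A E i j = A i j"
proof -
  have "lt_mult A E i j = (\<Sum>k=1..i. if k = j then A i k else 0)"
    unfolding lt_mult_def using assms by (intro sum.cong) (auto simp: is_identity_def)
  then show ?thesis using assms by simp
qed

(* A left inverse of a lower triangular matrix agrees on and below the diagonal
   with any right inverse: S = S (T R) = (S T) R = R. *)
lemma left_inverse_unique:
  assumes "lower_tri T" "is_identity (lt_mult S T)" "is_identity (lt_mult T R)"
    and "1 \<le> j" "j \<le> i"
  shows "S i j = R i j"
proof -
  have "S i j = lt_mult S (lt_mult T R) i j"
    using assms(3-5) by (simp add: lt_mult_identity_right)
  also have "\<dots> = lt_mult (lt_mult S T) R i j"
    using assms(1) by (rule lt_mult_assoc)
  also have "\<dots> = R i j"
    using assms(2,4,5) by (simp add: lt_mult_identity_left)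
  finally show ?thesis .
qed

fun sbinom :: "nat \<Rightarrow> real \<Rightarrow> real" where
  "sbinom 0 x = 1"
| "sbinom (Suc n) x = sbinom n x * (real n - x) / (real n + 1)"

lemma sbinom_pochhammer: "sbinom n x = pochhammer (-x) n / fact n"
proof (induction n)
  case (Suc n)
  have "sbinom (Suc n) x = pochhammer (-x) n / fact n * (real n - x) / (real n + 1)"
    using Suc by simp
  also have "\<dots> = pochhammer (-x) (Suc n) / fact (Suc n)"
    by (simp add: pochhammer_Suc field_simps)
  finally show ?case .
qed simp

lemma sbinom_gchoose: "sbinom n x = (-1) ^ n * (x gchoose n)"
  by (simp add: sbinom_pochhammer gbinomial_pochhammer)

(* On [0,1] every factor (n - x)/(n + 1) with n >= 1 lies in [0,1], so for n >= 1 the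
   value stays in [-1,0]. *)
lemma sbinom_bounds:
  assumes "0 \<le> x" "x \<le> 1"
  shows "-1 \<le> sbinom (Suc n) x \<and> sbinom (Suc n) x \<le> 0"
proof (induction n)
  case 0
  show ?case using assms by simp
next
  case (Suc n)
  define c where "c = (real (Suc n) - x) / (real (Suc n) + 1)"
  have c: "0 \<le> c" "c \<le> 1"
    using assms by (auto simp: field_simps c_def)
  have "sbinom (Suc (Suc n)) x = sbinom (Suc n) x * c"
    by (simp only: sbinom.simps(2)[of "Suc n"] c_def) simp
  moreover have "sbinom (Suc n) x * c \<le> 0"
    using Suc c by (simp add: mult_nonpos_nonneg del: sbinom.simps)
  moreover have "sbinom (Suc n) x * 1 \<le> sbinom (Suc n) x * c"
    using Suc c by (intro mult_left_mono_neg) (simp_all del: sbinom.simps)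
  ultimately show ?case using Suc by (simp del: sbinom.simps)
qed

lemma sbinom_at_0: "sbinom (Suc n) 0 = 0"
  by (induction n) auto

lemma sbinom_at_1: "sbinom (Suc (Suc n)) 1 = 0"
  by (induction n) auto

lemma continuous_on_sbinom: "continuous_on A (sbinom n)"
  by (induction n) (auto intro!: continuous_intros)

definition sbinom_slope :: "nat \<Rightarrow> real \<Rightarrow> real" where
  "sbinom_slope n x = convolution (\<lambda>j. sbinom j x) recip_succ n"

lemma sbinom_slope_rec:
  "(real n + 2) * sbinom_slope (Suc n) x = (real n + 1 - x) * sbinom_slope n x + sbinom (Suc n) x"
proof -
  have lhs: "(real n + 2) * sbinom_slope (Suc n) x
      = (\<Sum>j=0..Suc n. sbinom j x) + (\<Sum>j=0..Suc n. real j * sbinom j x / (real n + 2 - real j))"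
    unfolding sbinom_slope_def convolution_recip_succ sum_distrib_left sum.distrib[symmetric]
    by (intro sum.cong) (auto simp: field_simps)
  have shift: "(\<Sum>j=0..Suc n. real j * sbinom j x / (real n + 2 - real j))
      = (\<Sum>i=0..n. sbinom i x * (real i - x) / (real n + 1 - real i))"
  proof -
    have num: "real (Suc i) * sbinom (Suc i) x = sbinom i x * (real i - x)" for i
      by (simp add: field_simps)
    have den: "real n + 2 - real (Suc i) = real n + 1 - real i" for i
      by simp
    show ?thesis
      unfolding sum.atLeast0_atMost_Suc_shift by (simp only: o_def num den)
  qed
  have rhs: "(real n + 1 - x) * sbinom_slope n x
      = (\<Sum>i=0..n. sbinom i x) + (\<Sum>i=0..n. sbinom i x * (real i - x) / (real n + 1 - real i))"
    unfolding sbinom_slope_def convolution_recip_succ sum_distrib_left sum.distrib[symmetric]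
    by (intro sum.cong) (auto simp: field_simps)
  show ?thesis
    using lhs shift rhs by (simp add: sum.atLeast0_atMost_Suc del: sbinom.simps)
qed

lemma sbinom_has_derivative:
  "(sbinom (Suc n) has_real_derivative - sbinom_slope n x) (at x)"
proof (induction n arbitrary: x)
  case 0
  show ?case
    by (auto intro!: derivative_eq_intros simp: sbinom_slope_def convolution_def recip_succ_def)
next
  case (Suc n)
  have "((\<lambda>x. sbinom (Suc n) x * (real (Suc n) - x) / (real (Suc n) + 1)) has_real_derivative
      ((- sbinom_slope n x) * (real (Suc n) - x) - sbinom (Suc n) x) / (real (Suc n) + 1)) (at x)"
    by (auto intro!: derivative_eq_intros Suc.IH simp del: sbinom.simps)
  moreover have "((- sbinom_slope n x) * (real (Suc n) - x) - sbinom (Suc n) x) / (real (Suc n) + 1)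
      = - sbinom_slope (Suc n) x"
    using sbinom_slope_rec[of n x] by (simp add: field_simps del: sbinom.simps)
  ultimately show ?case
    by (simp only: sbinom.simps(2)[of "Suc n", abs_def])
qed

(* By the fundamental theorem of calculus and the zeros at 0 and 1. *)
lemma sbinom_slope_integral:
  assumes "1 \<le> n"
  shows "(sbinom_slope n has_integral 0) {0..1}"
proof -
  have "(sbinom_slope n has_integral (- sbinom (Suc n) 1) - (- sbinom (Suc n) 0)) {0..1}"
  proof (rule fundamental_theorem_of_calculus)
    fix x :: real
    have "((\<lambda>x. - sbinom (Suc n) x) has_real_derivative sbinom_slope n x) (at x)"
      using DERIV_minus[OF sbinom_has_derivative] by simp
    then show "((\<lambda>x. - sbinom (Suc n) x) has_vector_derivative sbinom_slope n x) (at x within {0..1})"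
      by (simp add: has_real_derivative_iff_has_vector_derivative has_vector_derivative_at_within)
  qed simp
  moreover obtain m where "n = Suc m"
    using assms by (cases n) auto
  ultimately show ?thesis
    by (simp only: sbinom_at_0 sbinom_at_1) simp
qed

definition gregory :: "nat \<Rightarrow> real" where
  "gregory n = integral {0..1} (sbinom n)"

lemma sbinom_has_integral: "(sbinom n has_integral gregory n) {0..1}"
  unfolding gregory_def
  by (intro integrable_integral integrable_continuous_interval continuous_on_sbinom)

lemma convolution_gregory_recip_succ:
  "convolution gregory recip_succ n = (if n = 0 then 1 else 0)"
proof (cases "n = 0")
  case True
  have "sbinom 0 = (\<lambda>_. 1)"
    by (rule ext) simp
  then have "gregory 0 = 1"
    by (simp add: gregory_def)
  with True show ?thesis
    by (simp add: convolution_def recip_succ_def)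
next
  case False
  have "(sbinom_slope n has_integral convolution gregory recip_succ n) {0..1}"
    unfolding sbinom_slope_def[abs_def] convolution_def
    by (intro has_integral_sum finite_atLeastAtMost has_integral_mult_left sbinom_has_integral)
  moreover have "(sbinom_slope n has_integral 0) {0..1}"
    using False by (intro sbinom_slope_integral) simp
  ultimately show ?thesis
    using False has_integral_unique by auto
qed

(* The harmonic number function H(x) = sum_k (1/(k+1) - 1/(k+1+x)) = digamma(x+1) + gamma. *)
definition harmonic :: "real \<Rightarrow> real" where
  "harmonic x = (\<Sum>k. 1 / (real k + 1) - 1 / (real k + 1 + x))"

definition harmonic_kernel :: "real \<Rightarrow> real \<Rightarrow> real" where
  "harmonic_kernel x u = (1 - u powr x) / (1 - u)"

lemma harmonic_sums:
  assumes "0 \<le> x"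
  shows "(\<lambda>k. 1 / (real k + 1) - 1 / (real k + 1 + x)) sums harmonic x"
proof -
  have "summable (\<lambda>k. 1 / (real k + 1) - 1 / (real k + 1 + x))"
  proof (rule summable_comparison_test')
    show "summable (\<lambda>k. x / (real k + 1) ^ 2)"
      using summable_mult[OF sums_summable[OF inverse_squares_sums], of x] by (simp add: add.commute)
    fix k :: nat
    have "1 / (real k + 1) - 1 / (real k + 1 + x) = x / ((real k + 1) * (real k + 1 + x))"
      using assms by (simp add: field_simps)
    also have "\<dots> \<le> x / (real k + 1) ^ 2"
      using assms by (intro divide_left_mono) (auto simp: power2_eq_square)
    finally show "norm (1 / (real k + 1) - 1 / (real k + 1 + x)) \<le> x / (real k + 1) ^ 2"
      using assms by (simp add: field_simps)
  qed
  then show ?thesis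
    unfolding harmonic_def by (rule summable_sums)
qed

(* H(x) = integral_0^1 (1 - u^x)/(1 - u) du, expanding the kernel as a geometric series. *)
lemma harmonic_kernel_has_integral:
  assumes "0 \<le> x"
  shows "(harmonic_kernel x has_integral harmonic x) {0<..<1}"
proof (rule has_integral_sums_nonneg)
  show "((\<lambda>u. u powr real k - u powr (real k + x)) has_integral
      1 / (real k + 1) - 1 / (real k + 1 + x)) {0<..<1}" for k
    unfolding has_integral_Icc_iff_Ioo[symmetric]
    using has_integral_powr_from_0[of "real k" 1] has_integral_powr_from_0[of "real k + x" 1] assms
    by (intro has_integral_diff) (simp_all add: add_ac)
  show "0 \<le> u powr real k - u powr (real k + x)" if "u \<in> {0<..<1}" for k u
    using that assms by (simp add: powr_mono')
  show "(\<lambda>k. u powr real k - u powr (real k + x)) sums harmonic_kernel x u" if "u \<in> {0<..<1}" for u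
  proof -
    have "(\<lambda>k. u ^ k * (1 - u powr x)) sums (1 / (1 - u) * (1 - u powr x))"
      using that geometric_sums[of u] by (intro sums_mult2) simp
    moreover have "u ^ k * (1 - u powr x) = u powr real k - u powr (real k + x)" for k
      using that by (simp add: powr_add powr_realpow algebra_simps)
    ultimately show ?thesis
      by (simp add: harmonic_kernel_def)
  qed
  show "(\<lambda>k. 1 / (real k + 1) - 1 / (real k + 1 + x)) sums harmonic x"
    using assms by (rule harmonic_sums)
qed

lemma one_minus_power_has_integral:
  "((\<lambda>u. (1 - u) ^ n) has_integral 1 / (real n + 1)) {0..1::real}"
proof -
  define F where "F u = - ((1 - u) ^ Suc n) / (real n + 1)" for u :: real
  have "((\<lambda>u. (1 - u) ^ n) has_integral F 1 - F 0) {0..1::real}"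
  proof (rule fundamental_theorem_of_calculus)
    fix u :: real
    have "((\<lambda>u. 1 - u) has_real_derivative -1) (at u)"
      by (auto intro!: derivative_eq_intros)
    then have "(F has_real_derivative - ((1 + real n) * (-1 * (1 - u) ^ n)) / (real n + 1)) (at u)"
      unfolding F_def by (intro DERIV_cdivide DERIV_minus DERIV_power_Suc)
    moreover have "- ((1 + real n) * (-1 * (1 - u) ^ n)) / (real n + 1) = (1 - u) ^ n"
      by (simp add: field_simps)
    ultimately have "(F has_real_derivative (1 - u) ^ n) (at u)"
      by metis
    then show "(F has_vector_derivative (1 - u) ^ n) (at u within {0..1})"
      by (simp add: has_real_derivative_iff_has_vector_derivative has_vector_derivative_at_within)
  qed simp
  then show ?thesis
    by (simp add: F_def)
qed

(* Binomial series: u^x = sum_n (x choose n) (u-1)^n, rewritten for the kernel. *)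
lemma sbinom_series:
  assumes "0 < u" "u < 1"
  shows "(\<lambda>n. - sbinom (Suc n) x * (1 - u) ^ n) sums harmonic_kernel x u"
proof -
  have "(\<lambda>n. (x gchoose n) * (u - 1) ^ n) sums u powr x"
    using gen_binomial_real[of "u - 1" x] assms by simp
  moreover have "(x gchoose n) * (u - 1) ^ n = sbinom n x * (1 - u) ^ n" for n
    by (simp add: sbinom_gchoose power_minus[symmetric])
  ultimately have "(\<lambda>n. sbinom n x * (1 - u) ^ n) sums u powr x"
    by simp
  then have "(\<lambda>n. sbinom (Suc n) x * (1 - u) ^ Suc n) sums (u powr x - 1)"
    by (subst sums_Suc_iff) simp
  then have "(\<lambda>n. sbinom (Suc n) x * (1 - u) ^ Suc n / (u - 1)) sums ((u powr x - 1) / (u - 1))"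
    by (rule sums_divide)
  moreover have "sbinom (Suc n) x * (1 - u) ^ Suc n / (u - 1) = - sbinom (Suc n) x * (1 - u) ^ n" for n
    using assms by (simp add: field_simps del: sbinom.simps)
  moreover have "(u powr x - 1) / (u - 1) = harmonic_kernel x u"
    using assms by (simp add: harmonic_kernel_def field_simps)
  ultimately show ?thesis
    by simp
qed

(* Integrating the kernel series term by term: sum_n -sbinom(n+1)(x)/(n+1) = H(x). *)
lemma sbinom_recip_sums_harmonic:
  assumes "0 \<le> x" "x \<le> 1"
  shows "(\<lambda>n. - sbinom (Suc n) x / real (Suc n)) sums harmonic x"
proof (rule sums_has_integral_nonneg)
  show "((\<lambda>u. - sbinom (Suc n) x * (1 - u) ^ n) has_integral - sbinom (Suc n) x / real (Suc n)) {0<..<1}" for n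
    unfolding has_integral_Icc_iff_Ioo[symmetric]
    using has_integral_mult_right[OF one_minus_power_has_integral, of "- sbinom (Suc n) x" n]
    by (simp add: add.commute del: sbinom.simps)
  show "0 \<le> - sbinom (Suc n) x * (1 - u) ^ n" if "u \<in> {0<..<1}" for n u
    using that sbinom_bounds[OF assms, of n] by (intro mult_nonneg_nonneg) (auto simp del: sbinom.simps)
  show "(\<lambda>n. - sbinom (Suc n) x * (1 - u) ^ n) sums harmonic_kernel x u" if "u \<in> {0<..<1}" for u
    using that by (intro sbinom_series) auto
  show "(harmonic_kernel x has_integral harmonic x) {0<..<1}"
    using assms by (intro harmonic_kernel_has_integral)
qed

(* integral_0^1 H = gamma: termwise the integrals are 1/(k+1) - ln((k+2)/(k+1)). *)
lemma harmonic_has_integral: "(harmonic has_integral euler_mascheroni) {0..1}"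
proof (rule has_integral_sums_nonneg)
  show "((\<lambda>x. 1 / (real k + 1) - 1 / (real k + 1 + x)) has_integral
      inverse (of_nat (k + 1)) + ln (of_nat (k + 1)) - ln (of_nat (k + 2))) {0..1}" for k
  proof -
    have "((\<lambda>x. 1 / (real k + 1 + x)) has_integral ln (real k + 1 + 1) - ln (real k + 1 + 0)) {0..1}"
    proof (rule fundamental_theorem_of_calculus)
      fix x :: real
      assume "x \<in> {0..1}"
      then have "((\<lambda>x. ln (real k + 1 + x)) has_real_derivative 1 / (real k + 1 + x)) (at x)"
        by (auto intro!: derivative_eq_intros simp: field_simps)
      then show "((\<lambda>x. ln (real k + 1 + x)) has_vector_derivative 1 / (real k + 1 + x)) (at x within {0..1})"
        by (simp add: has_real_derivative_iff_has_vector_derivative has_vector_derivative_at_within)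
    qed simp
    from has_integral_diff[OF has_integral_const_real[of "1 / (real k + 1)" 0 1] this]
    show ?thesis
      by (simp add: field_simps add.commute)
  qed
  show "0 \<le> 1 / (real k + 1) - 1 / (real k + 1 + x)" if "x \<in> {0..1}" for k x
    using that by (simp add: frac_le)
  show "(\<lambda>k. 1 / (real k + 1) - 1 / (real k + 1 + x)) sums harmonic x" if "x \<in> {0..1}" for x
    using that by (intro harmonic_sums) simp
qed (rule euler_mascheroni_sum_real)

(* Integrating the previous expansion of H over [0,1] term by term. *)
lemma gregory_sums_euler_mascheroni:
  "(\<lambda>n. - gregory (Suc n) / real (Suc n)) sums euler_mascheroni"
proof (rule sums_has_integral_nonneg)
  show "((\<lambda>x. - sbinom (Suc n) x / real (Suc n)) has_integral - gregory (Suc n) / real (Suc n)) {0..1}" for n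
    by (intro has_integral_divide has_integral_neg sbinom_has_integral)
  show "0 \<le> - sbinom (Suc n) x / real (Suc n)" if "x \<in> {0..1}" for n x
    using that sbinom_bounds[of x n] by (intro divide_nonneg_nonneg) (auto simp del: sbinom.simps)
  show "(\<lambda>n. - sbinom (Suc n) x / real (Suc n)) sums harmonic x" if "x \<in> {0..1}" for x
    using that by (intro sbinom_recip_sums_harmonic) auto
qed (rule harmonic_has_integral)

lemma gregory_toeplitz_inverse:
  "is_identity (lt_mult (toeplitz gregory) Tmat)" "is_identity (lt_mult Tmat (toeplitz gregory))"
  unfolding Tmat_toeplitz is_identity_def
  by (simp_all add: lt_mult_toeplitz convolution_commute[of recip_succ]
      convolution_gregory_recip_succ toeplitz_def)

(* For any left inverse S of T, the weights w = S (1/2, 1/3, ...) are the negated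
   Gregory coefficients: w_n = convolution_n - gregory_n = -gregory_n for n >= 1. *)
lemma weights_eq_gregory:
  assumes "is_identity (lt_mult S Tmat)" "1 \<le> n"
  shows "lt_apply S recip_succ n = - gregory n"
proof -
  have "lt_apply S recip_succ n = lt_apply (toeplitz gregory) recip_succ n"
    unfolding lt_apply_def
    using left_inverse_unique[OF _ assms(1) gregory_toeplitz_inverse(2)]
    by (intro sum.cong) (auto simp: Tmat_toeplitz lower_tri_toeplitz)
  also have "\<dots> = - gregory n"
    using assms(2) by (simp add: lt_apply_toeplitz convolution_gregory_recip_succ recip_succ_def)
  finally show ?thesis .
qed

theorem mainTheorem5:
  shows "(\<exists>S. lower_tri S \<and> is_identity (lt_mult S Tmat) \<and> is_identity (lt_mult Tmat S))
    \<and> (\<forall>S. lower_tri S \<and> is_identity (lt_mult S Tmat) \<and> is_identity (lt_mult Tmat S) \<longrightarrow>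
         (let w = lt_apply S (\<lambda>k. 1 / real (k + 1))
          in (\<lambda>n. w (Suc n) / real (Suc n)) sums euler_mascheroni))"
proof (intro conjI allI impI)
  show "\<exists>S. lower_tri S \<and> is_identity (lt_mult S Tmat) \<and> is_identity (lt_mult Tmat S)"
    using lower_tri_toeplitz gregory_toeplitz_inverse by blast
next
  fix S
  assume "lower_tri S \<and> is_identity (lt_mult S Tmat) \<and> is_identity (lt_mult Tmat S)"
  then have "lt_apply S recip_succ (Suc n) = - gregory (Suc n)" for n
    by (intro weights_eq_gregory) auto
  then show "let w = lt_apply S (\<lambda>k. 1 / real (k + 1))
      in (\<lambda>n. w (Suc n) / real (Suc n)) sums euler_mascheroni"
    using gregory_sums_euler_mascheroni by (simp add: recip_succ_def[abs_def])
qed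

end
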